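(* Let $(X,d,\mu)$ be a space of homogeneous type, let $p(\cdot)\in\mathrm{LH}$ with associated limit value $p_\infty$, let $w\in A_{p(\cdot)}$ and $W(x)=w(x)^{p(x)}$. Then there are constants $c,C>0$ (independent of the ball) such that for every ball $B$ with $\|w\chi_B\|_{p(\cdot)}\ge1$, \[ c\,W(B)^{1/p_\infty}\le\|w\chi_B\|_{p(\cdot)}\le C\,W(B)^{1/p_\infty}, \] where $W(B)=\int_B W\,d\mu$.
   Context: A space of homogeneous type $(X,d,\mu)$: $X$ nonempty, $d$ a quasi-metric ($d(x,y)=0$ iff $x=y$, symmetric, $d(x,y)\le A_0(d(x,z)+d(z,y))$ for some $A_0\ge1$), $\mu$ a regular measure on the $\sigma$-algebra generated by balls $B(x,r)=\{y:d(x,y)<r\}$ and open sets, with $0<\mu(B(x,2r))\le C_\mu\mu(B(x,r))<\infty$. An exponent is a measurable $p:X\to[1,\infty]$. With $X_\infty=\{p=\infty\}$, $\rho_{p(\cdot)}(f)=\int_{X\setminus X_\infty}|f(x)|^{p(x)}d\mu+\|f\|_{L^\infty(X_\infty)}$ and $\|f\|_{p(\cdot)}=\inf\{\lambda>0:\rho_{p(\cdot)}(f/\lambda)\le1\}$; $p'(x)=p(x)/(p(x)-1)$ (with $1/0=\infty$, $1/\infty=0$). $p(\cdot)\in\mathrm{LH}_0$ if there is $C_0$ with $|p(x)-p(y)|<-C_0/\log d(x,y)$ whenever $d(x,y)<1/2$; $p(\cdot)\in\mathrm{LH}_\infty$ if there are constants $C_\infty,p_\infty$ with $|p(x)-p_\infty|<C_\infty/\log(e+d(x,x_0))$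 for all $x$, for a fixed base point $x_0$ (choice irrelevant); $\mathrm{LH}=\mathrm{LH}_0\cap\mathrm{LH}_\infty$. A weight is a locally integrable $w:X\to[0,\infty]$ with $0<w<\infty$ a.e.; $w\in A_{p(\cdot)}$ means there is $K$ with $\|w\chi_B\|_{p(\cdot)}\|w^{-1}\chi_B\|_{p'(\cdot)}\le K\mu(B)$ for every ball $B$. *)

theory Defs
  imports "HOL-Analysis.Analysis" "HOL-Probability.Essential_Supremum"
begin

definition qball :: "('a \<Rightarrow> 'a \<Rightarrow> real) \<Rightarrow> 'a \<Rightarrow> real \<Rightarrow> 'a set" where
  "qball d x r = {y. d x y < r}"

definition qopen :: "('a \<Rightarrow> 'a \<Rightarrow> real) \<Rightarrow> 'a set \<Rightarrow> bool" where
  "qopen d U \<longleftrightarrow> (\<forall>x\<in>U. \<exists>r>0. qball d x r \<subseteq> U)"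

definition quasi_metric :: "('a \<Rightarrow> 'a \<Rightarrow> real) \<Rightarrow> real \<Rightarrow> bool" where
  "quasi_metric d A0 \<longleftrightarrow> A0 \<ge> 1 \<and> (\<forall>x y. d x y \<ge> 0) \<and> (\<forall>x y. d x y = 0 \<longleftrightarrow> x = y)
     \<and> (\<forall>x y. d x y = d y x) \<and> (\<forall>x y z. d x y \<le> A0 * (d x z + d z y))"

definition homogeneous_type :: "('a \<Rightarrow> 'a \<Rightarrow> real) \<Rightarrow> 'a measure \<Rightarrow> bool" where
  "homogeneous_type d M \<longleftrightarrow>
     (\<exists>A0. quasi_metric d A0) \<and>
     space M = UNIV \<and>
     sets M = sigma_sets UNIV ({qball d x r | x r. True} \<union> {U. qopen d U}) \<and>
     (\<forall>E\<in>sets M. emeasure M E = (INF U\<in>{U. qopen d U \<and> E \<subseteq> U}. emeasure M U)) \<and>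
     (\<exists>C\<mu>. \<forall>x r. r > 0 \<longrightarrow>
        0 < emeasure M (qball d x (2*r)) \<and>
        emeasure M (qball d x (2*r)) \<le> ennreal C\<mu> * emeasure M (qball d x r) \<and>
        emeasure M (qball d x r) < \<infinity>)"

definition exponent :: "'a measure \<Rightarrow> ('a \<Rightarrow> ereal) \<Rightarrow> bool" where
  "exponent M p \<longleftrightarrow> p \<in> borel_measurable M \<and> (\<forall>x. 1 \<le> p x)"

definition Xinf :: "('a \<Rightarrow> ereal) \<Rightarrow> 'a set" where
  "Xinf p = {x. p x = \<infinity>}"

definition modular :: "'a measure \<Rightarrow> ('a \<Rightarrow> ereal) \<Rightarrow> ('a \<Rightarrow> real) \<Rightarrow> ennreal" where
  "modular M p f =
     (\<integral>\<^sup>+ x. indicator (- Xinf p) x * ennreal (\<bar>f x\<bar> powr real_of_ereal (p x)) \<partial>M)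
     + esssup M (\<lambda>x. ennreal \<bar>f x\<bar> * indicator (Xinf p) x)"

text \<open>The Luxemburg norm (value \<infinity> if no admissible lambda exists).\<close>
definition vnorm :: "'a measure \<Rightarrow> ('a \<Rightarrow> ereal) \<Rightarrow> ('a \<Rightarrow> real) \<Rightarrow> ennreal" where
  "vnorm M p f = (INF t\<in>{t::real. t > 0 \<and> modular M p (\<lambda>x. f x / t) \<le> 1}. ennreal t)"

definition conj_exp :: "('a \<Rightarrow> ereal) \<Rightarrow> 'a \<Rightarrow> ereal" where
  "conj_exp p x = (if p x = 1 then \<infinity> else if p x = \<infinity> then 1
     else ereal (real_of_ereal (p x) / (real_of_ereal (p x) - 1)))"

definition LH0 :: "('a \<Rightarrow> 'a \<Rightarrow> real) \<Rightarrow> ('a \<Rightarrow> ereal) \<Rightarrow> bool" where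
  "LH0 d p \<longleftrightarrow> (\<exists>C0. \<forall>x y. 0 < d x y \<and> d x y < 1/2 \<longrightarrow>
      \<bar>p x - p y\<bar> < ereal (- C0 / ln (d x y)))"

definition LHinf :: "('a \<Rightarrow> 'a \<Rightarrow> real) \<Rightarrow> ('a \<Rightarrow> ereal) \<Rightarrow> 'a \<Rightarrow> real \<Rightarrow> bool" where
  "LHinf d p x0 pinf \<longleftrightarrow> (\<exists>Cinf. \<forall>x.
      \<bar>p x - ereal pinf\<bar> < ereal (Cinf / ln (exp 1 + d x x0)))"

definition weight :: "('a \<Rightarrow> 'a \<Rightarrow> real) \<Rightarrow> 'a measure \<Rightarrow> ('a \<Rightarrow> real) \<Rightarrow> bool" where
  "weight d M w \<longleftrightarrow> w \<in> borel_measurable M \<and> (\<forall>x. 0 \<le> w x) \<and>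
     (\<forall>x r. (\<integral>\<^sup>+ y\<in>qball d x r. ennreal (w y) \<partial>M) < \<infinity>) \<and>
     (AE x in M. 0 < w x)"

definition Ap :: "('a \<Rightarrow> 'a \<Rightarrow> real) \<Rightarrow> 'a measure \<Rightarrow> ('a \<Rightarrow> ereal) \<Rightarrow> ('a \<Rightarrow> real) \<Rightarrow> bool" where
  "Ap d M p w \<longleftrightarrow> weight d M w \<and> (\<exists>K. \<forall>x r.
      vnorm M p (\<lambda>y. w y * indicator (qball d x r) y)
      * vnorm M (conj_exp p) (\<lambda>y. inverse (w y) * indicator (qball d x r) y)
      \<le> ennreal K * emeasure M (qball d x r))"

definition epowr :: "ennreal \<Rightarrow> real \<Rightarrow> ennreal" where
  "epowr t a = (if t = \<infinity> then \<infinity> else ennreal (enn2real t powr a))"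

end

theory Submission
  imports Defs
begin

(*
  Let n = ||w chi_B|| >= 1 and let P bound p. At the norm the modular is pinned between
  constants, 2^-P <= rho(w chi_B / n) <= 2^P, so the task is to compare the integral of (w/n)^p over B
  with W(B), the integral of w^p. Split B at the ball B(x0, n^delta). Off this ball the
  LH_infty condition gives |p(x) - p_infty| log n = O(1), hence n^-p(x) is comparable to
  n^-p_infty there. Inside it, Hoelder's inequality, the A_p condition and doubling give
  ||w chi_B(x0,R)|| <= D R^kappa, so for small delta the near part contributes O(n^p_infty)
  to W(B) and, once n is large, less than 2^-P-1 to the modular. Hence W(B) is comparable
  to n^p_infty.
  When p_infty <= 0 (where 1/p_infty is meaningless) LH_infty together with p >= 1 forces X
  to be bounded; then all norms are bounded and the estimate holds for every exponent.
*)

lemma ennreal_le_mult_INF: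
  fixes c :: ennreal
  assumes "0 < c" "c < \<infinity>" and le: "\<And>s. s \<in> S \<Longrightarrow> a \<le> c * f s"
  shows "a \<le> c * (INF s\<in>S. f s)"
proof -
  have "a / c \<le> (INF s\<in>S. f s)"
    using assms by (intro INF_greatest divide_le_posI_ennreal) auto
  then have "c * (a / c) \<le> c * (INF s\<in>S. f s)"
    by (rule mult_left_mono) simp
  moreover have "c * (a / c) = a"
    using assms by (simp add: ennreal_times_divide mult_divide_eq_ennreal[of c a] mult.commute)
  ultimately show ?thesis
    by simp
qed

lemma Youngs_inequality_sum:
  fixes r a b :: real
  assumes "1 < r" "0 \<le> a" "0 \<le> b"
  shows "a * b \<le> a powr r + b powr (r / (r - 1))"
proof -
  have "a * b \<le> a powr r / r + b powr (r / (r - 1)) / (r / (r - 1))"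
    by (rule Youngs_inequality) (use assms in \<open>auto simp: field_simps\<close>)
  also have "\<dots> \<le> a powr r + b powr (r / (r - 1))"
    using assms divide_left_mono[of 1 r "a powr r"]
      divide_left_mono[of 1 "r / (r - 1)" "b powr (r / (r - 1))"]
    by (intro add_mono) (auto simp: field_simps)
  finally show ?thesis .
qed

(* S bounds b where r = 1, i.e. where the conjugate exponent is infinite. *)
lemma Youngs_inequality_ennreal:
  fixes r a b :: real and S :: ennreal
  assumes "1 \<le> r" "0 \<le> a" "0 \<le> b" "r = 1 \<Longrightarrow> ennreal b \<le> S"
  shows "ennreal (a * b)
    \<le> ennreal (a powr r) + (if r = 1 then 0 else ennreal (b powr (r / (r - 1)))) + S * ennreal (a powr r)"
proof (cases "r = 1")
  case True
  then have "ennreal a * ennreal b \<le> ennreal a * S"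
    using assms by (intro mult_left_mono) auto
  then show ?thesis
    using True assms by (simp add: ennreal_mult mult.commute add_increasing)
next
  case False
  then have "a * b \<le> a powr r + b powr (r / (r - 1))"
    using assms by (intro Youngs_inequality_sum) auto
  then have "ennreal (a * b) \<le> ennreal (a powr r) + ennreal (b powr (r / (r - 1)))"
    by (simp add: ennreal_plus[symmetric] ennreal_leI del: ennreal_plus)
  then show ?thesis
    using False by (simp add: add_increasing2)
qed

definition comparable :: "real \<Rightarrow> real \<Rightarrow> ennreal \<Rightarrow> ennreal \<Rightarrow> bool" where
  "comparable c C x y \<longleftrightarrow> ennreal c * y \<le> x \<and> x \<le> ennreal C * y"

lemma comparable_ennreal_iff:
  "0 \<le> c \<Longrightarrow> 0 \<le> C \<Longrightarrow> 0 \<le> x \<Longrightarrow> 0 \<le> y \<Longrightarrow>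
    comparable c C (ennreal x) (ennreal y) \<longleftrightarrow> c * y \<le> x \<and> x \<le> C * y"
  by (simp add: comparable_def ennreal_mult[symmetric] ennreal_le_iff)

lemma epowr_ennreal: "0 \<le> x \<Longrightarrow> epowr (ennreal x) e = ennreal (x powr e)"
  by (simp add: epowr_def)

lemma powr_between_min_max:
  fixes a b x e :: real
  assumes "0 < a" "a \<le> x" "x \<le> b"
  shows "min (a powr e) (b powr e) \<le> x powr e" "x powr e \<le> max (a powr e) (b powr e)"
proof -
  have "a powr e \<le> x powr e \<and> x powr e \<le> b powr e \<or> b powr e \<le> x powr e \<and> x powr e \<le> a powr e"
  proof (cases "0 \<le> e")
    case True
    then show ?thesis
      using assms by (auto intro: powr_mono2)
  next
    case False
    then show ?thesis
      using assms by (auto intro: powr_mono2')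
  qed
  then show "min (a powr e) (b powr e) \<le> x powr e" "x powr e \<le> max (a powr e) (b powr e)"
    by auto
qed

lemma powr_le_exp_mult_powr:
  fixes n a b c :: real
  assumes "0 < n" "\<bar>a - b\<bar> * \<bar>ln n\<bar> \<le> c"
  shows "n powr a \<le> exp c * n powr b"
proof -
  have "n powr a = exp ((a - b) * ln n) * n powr b"
    using assms by (simp add: powr_def exp_add[symmetric] algebra_simps)
  also have "\<dots> \<le> exp c * n powr b"
    using assms by (intro mult_right_mono) (auto simp: abs_mult intro: order_trans[OF abs_ge_self])
  finally show ?thesis .
qed

lemma le_powr_inverse_if_powr_le:
  fixes x y p :: real
  assumes "0 \<le> x" "0 < p" "x powr p \<le> y"
  shows "x \<le> y powr (1 / p)"
proof -
  have "x = (x powr p) powr (1 / p)"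
    using assms by (simp add: powr_powr)
  also have "\<dots> \<le> y powr (1 / p)"
    using assms by (intro powr_mono2) auto
  finally show ?thesis .
qed

section \<open>Hoelder's inequality for variable exponents\<close>

lemma modular_real_exponent:
  "modular M (\<lambda>x. ereal (q x)) f = (\<integral>\<^sup>+ x. ennreal (\<bar>f x\<bar> powr q x) \<partial>M)"
proof -
  have "esssup M (\<lambda>x. 0::ennreal) = 0"
    by (intro antisym esssup_I) auto
  then show ?thesis
    by (simp add: modular_def Xinf_def)
qed

lemma modular_conj_real_exponent:
  "modular M (conj_exp (\<lambda>x. ereal (q x))) g =
     (\<integral>\<^sup>+ x. (if q x = 1 then 0 else ennreal (\<bar>g x\<bar> powr (q x / (q x - 1)))) \<partial>M)
     + esssup M (\<lambda>x. ennreal \<bar>g x\<bar> * indicator {x. q x = 1} x)"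
proof -
  have "Xinf (conj_exp (\<lambda>x. ereal (q x))) = {x. q x = 1}"
    by (auto simp: Xinf_def conj_exp_def one_ereal_def)
  then show ?thesis
    unfolding modular_def
    by (intro arg_cong2[where f = "(+)"] nn_integral_cong)
       (auto simp: conj_exp_def indicator_def one_ereal_def)
qed

lemma vnorm_le_ennreal:
  "0 < t \<Longrightarrow> modular M p (\<lambda>x. f x / t) \<le> 1 \<Longrightarrow> vnorm M p f \<le> ennreal t"
  unfolding vnorm_def by (rule INF_lower) auto

lemma vnorm_less_ennrealD:
  "vnorm M p f < ennreal l \<Longrightarrow> \<exists>t. 0 < t \<and> t < l \<and> modular M p (\<lambda>x. f x / t) \<le> 1"
  unfolding vnorm_def by (auto simp: INF_less_iff ennreal_less_iff)

(* LH_infty forces the exponent to be finite everywhere, so exponents are modelled by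
  real-valued functions q, standing for the extended-real exponent ereal o q. *)
locale variable_exponent =
  fixes M :: "'a measure" and q :: "'a \<Rightarrow> real"
  assumes q_measurable [measurable]: "q \<in> borel_measurable M"
    and one_le_q: "1 \<le> q x"
begin

lemma modular_Hoelder:
  assumes [measurable]: "f \<in> borel_measurable M" "g \<in> borel_measurable M"
    and t: "0 < t" and s: "0 < s"
    and f: "modular M (\<lambda>x. ereal (q x)) (\<lambda>x. f x / t) \<le> 1"
    and g: "modular M (conj_exp (\<lambda>x. ereal (q x))) (\<lambda>x. g x / s) \<le> 1"
  shows "(\<integral>\<^sup>+ x. ennreal \<bar>f x * g x\<bar> \<partial>M) \<le> 2 * ennreal (t * s)"
proof -
  define a where "a x = \<bar>f x / t\<bar>" for x
  define b where "b x = \<bar>g x / s\<bar>" for x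
  define G where "G x = ennreal (a x powr q x)" for x
  define F where "F x = (if q x = 1 then 0 else ennreal (b x powr (q x / (q x - 1))))" for x
  define S where "S = esssup M (\<lambda>x. ennreal (b x) * indicator {x. q x = 1} x)"
  have ab_nonneg: "0 \<le> a x" "0 \<le> b x" for x
    by (simp_all add: a_def b_def)
  have [measurable]: "G \<in> borel_measurable M" "F \<in> borel_measurable M"
    unfolding G_def F_def a_def b_def by measurable
  have int_G: "integral\<^sup>N M G \<le> 1"
    using f unfolding modular_real_exponent G_def a_def .
  have int_F: "integral\<^sup>N M F + S \<le> 1"
    using g unfolding modular_conj_real_exponent F_def S_def b_def .
  have "AE x in M. ennreal (a x * b x) \<le> G x + F x + S * G x"
    using esssup_AE[of "\<lambda>x. ennreal (b x) * indicator {x. q x = 1} x" M]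
  proof eventually_elim
    case (elim x)
    then show ?case
      unfolding G_def F_def S_def using one_le_q[of x] ab_nonneg[of x]
      by (intro Youngs_inequality_ennreal) auto
  qed
  then have "(\<integral>\<^sup>+ x. ennreal (a x * b x) \<partial>M) \<le> (\<integral>\<^sup>+ x. G x + F x + S * G x \<partial>M)"
    by (rule nn_integral_mono_AE)
  also have "\<dots> = integral\<^sup>N M G + (integral\<^sup>N M F + S * integral\<^sup>N M G)"
    by (simp add: nn_integral_add nn_integral_cmult add.assoc)
  also have "\<dots> \<le> 1 + 1"
    using int_G int_F mult_left_mono[OF int_G, of S]
    by (intro add_mono) (auto intro: order_trans[OF add_left_mono])
  finally have "(\<integral>\<^sup>+ x. ennreal (a x * b x) \<partial>M) \<le> 2"
    by simp
  moreover have "(\<integral>\<^sup>+ x. ennreal \<bar>f x * g x\<bar> \<partial>M)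
      = ennreal (t * s) * (\<integral>\<^sup>+ x. ennreal (a x * b x) \<partial>M)"
    using t s ab_nonneg
    by (subst nn_integral_cmult[symmetric]) (auto simp: a_def b_def abs_mult ennreal_mult[symmetric] intro!: nn_integral_cong)
  ultimately have "(\<integral>\<^sup>+ x. ennreal \<bar>f x * g x\<bar> \<partial>M) \<le> ennreal (t * s) * 2"
    by (simp add: mult_left_mono)
  then show ?thesis
    by (simp add: mult.commute)
qed

lemma vnorm_Hoelder:
  assumes "f \<in> borel_measurable M" "g \<in> borel_measurable M" "0 < t"
    and "modular M (\<lambda>x. ereal (q x)) (\<lambda>x. f x / t) \<le> 1"
  shows "(\<integral>\<^sup>+ x. ennreal \<bar>f x * g x\<bar> \<partial>M)
    \<le> 2 * ennreal t * vnorm M (conj_exp (\<lambda>x. ereal (q x))) g"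
  unfolding vnorm_def
proof (rule ennreal_le_mult_INF)
  fix s assume "s \<in> {s. 0 < s \<and> modular M (conj_exp (\<lambda>x. ereal (q x))) (\<lambda>x. g x / s) \<le> 1}"
  then show "(\<integral>\<^sup>+ x. ennreal \<bar>f x * g x\<bar> \<partial>M) \<le> 2 * ennreal t * ennreal s"
    using modular_Hoelder[of f g t s] assms by (simp add: ennreal_mult mult.assoc)
qed (use \<open>0 < t\<close> in \<open>auto simp: ennreal_zero_less_mult_iff ennreal_mult_less_top\<close>)

end

section \<open>The weighted modular\<close>

locale exponent_weight = variable_exponent +
  fixes w :: "'a \<Rightarrow> real" and P :: real
  assumes q_le_P: "q x \<le> P"
    and w_measurable [measurable]: "w \<in> borel_measurable M"
    and w_nonneg: "0 \<le> w x"
begin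

definition rho :: "'a set \<Rightarrow> real \<Rightarrow> ennreal" where
  "rho A l = modular M (\<lambda>x. ereal (q x)) (\<lambda>y. w y * indicator A y / l)"

definition wnorm :: "'a set \<Rightarrow> ennreal" where
  "wnorm A = vnorm M (\<lambda>x. ereal (q x)) (\<lambda>y. w y * indicator A y)"

definition W :: "'a set \<Rightarrow> ennreal" where
  "W A = (\<integral>\<^sup>+ y\<in>A. ennreal (w y powr q y) \<partial>M)"

lemma one_le_P: "1 \<le> P"
  using one_le_q q_le_P by (rule order_trans)

lemma rho_eq: "0 < l \<Longrightarrow> rho A l = (\<integral>\<^sup>+ x\<in>A. ennreal ((w x / l) powr q x) \<partial>M)"
  unfolding rho_def modular_real_exponent
  by (intro nn_integral_cong) (auto simp: indicator_def w_nonneg)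

lemma W_eq_rho: "W A = rho A 1"
  by (simp add: W_def rho_eq)

lemma rho_antimono:
  assumes "0 < t" "t \<le> l"
  shows "rho A l \<le> rho A t"
  unfolding rho_eq[OF assms(1)] rho_eq[OF less_le_trans[OF assms]] using assms
  by (intro nn_integral_mono mult_right_mono ennreal_leI powr_mono2 divide_left_mono)
     (auto simp: w_nonneg intro: order_trans[OF zero_le_one one_le_q])

lemma rho_mono: "A \<subseteq> B \<Longrightarrow> 0 < l \<Longrightarrow> rho A l \<le> rho B l"
  by (simp add: rho_eq nn_set_integral_set_mono)

lemma rho_split:
  assumes "A \<in> sets M" "B \<in> sets M" "0 < l"
  shows "rho A l = rho (A - B) l + rho (A \<inter> B) l"
proof -
  have "rho ((A - B) \<union> (A \<inter> B)) l = rho (A - B) l + rho (A \<inter> B) l"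
    unfolding rho_eq[OF assms(3)] using assms by (intro nn_integral_disjoint_pair) auto
  moreover have "(A - B) \<union> (A \<inter> B) = A"
    by blast
  ultimately show ?thesis
    by simp
qed

lemma rho_le_cmult_rho:
  assumes [measurable]: "A \<in> sets M" and "0 < l" "0 < l'" "0 \<le> c"
    and ratio: "\<And>x. x \<in> A \<Longrightarrow> (l' / l) powr q x \<le> c"
  shows "rho A l \<le> ennreal c * rho A l'"
proof -
  have "rho A l \<le> (\<integral>\<^sup>+ x\<in>A. ennreal c * ennreal ((w x / l') powr q x) \<partial>M)"
    unfolding rho_eq[OF \<open>0 < l\<close>]
  proof (intro nn_integral_mono)
    fix x
    have "(w x / l) powr q x = (w x / l') powr q x * (l' / l) powr q x"
      using assms w_nonneg[of x] by (simp add: powr_mult[symmetric])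
    also have "\<dots> \<le> (w x / l') powr q x * c" if "x \<in> A"
      using ratio[OF that] by (intro mult_left_mono) auto
    finally show "ennreal ((w x / l) powr q x) * indicator A x
        \<le> ennreal c * ennreal ((w x / l') powr q x) * indicator A x"
      using \<open>0 \<le> c\<close> by (auto simp: indicator_def ennreal_mult[symmetric] mult.commute intro: ennreal_leI)
  qed
  also have "\<dots> = ennreal c * rho A l'"
    using \<open>0 < l'\<close> by (simp add: rho_eq nn_integral_cmult mult.assoc)
  finally show ?thesis .
qed

lemma rho_scale_le:
  assumes "A \<in> sets M" "1 \<le> a" "0 < l"
  shows "rho A (a * l) \<le> ennreal (1 / a) * rho A l"
proof (rule rho_le_cmult_rho)
  fix x
  have "(l / (a * l)) powr q x = 1 / a powr q x"
    using assms by (simp add: powr_divide)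
  also have "\<dots> \<le> 1 / a"
    using assms one_le_q[of x] by (intro divide_left_mono) (auto intro: order_trans[of _ "a powr 1"] powr_mono)
  finally show "(l / (a * l)) powr q x \<le> 1 / a" .
qed (use assms in auto)

lemma rho_scale_ge:
  assumes "A \<in> sets M" "1 \<le> a" "0 < l"
  shows "rho A l \<le> ennreal (a powr P) * rho A (a * l)"
  using assms q_le_P by (intro rho_le_cmult_rho) (auto intro: powr_mono)

lemma emeasure_le_Hoelder:
  assumes "AE x in M. 0 < w x" and [measurable]: "E \<in> sets M" "B \<in> sets M"
    and "E \<subseteq> B" "0 < t" "rho E t \<le> 1"
  shows "emeasure M E
    \<le> 2 * ennreal t * vnorm M (conj_exp (\<lambda>x. ereal (q x))) (\<lambda>y. inverse (w y) * indicator B y)"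
proof -
  have "emeasure M E
      = (\<integral>\<^sup>+ x. ennreal \<bar>(w x * indicator E x) * (inverse (w x) * indicator B x)\<bar> \<partial>M)"
    using assms(1)
    by (subst nn_integral_indicator[symmetric, OF assms(2)], intro nn_integral_cong_AE, elim AE_mp)
       (use assms(4) in \<open>auto simp: indicator_def\<close>)
  also have "\<dots> \<le> 2 * ennreal t * vnorm M (conj_exp (\<lambda>x. ereal (q x))) (\<lambda>y. inverse (w y) * indicator B y)"
    using assms unfolding rho_def by (intro vnorm_Hoelder) measurable
  finally show ?thesis .
qed

lemma wnorm_le: "0 < t \<Longrightarrow> rho A t \<le> 1 \<Longrightarrow> wnorm A \<le> ennreal t"
  unfolding wnorm_def rho_def by (rule vnorm_le_ennreal)

lemma rho_le_1_if_wnorm_less: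
  assumes "wnorm A < ennreal l"
  shows "rho A l \<le> 1"
proof -
  obtain t where "0 < t" "t < l" "rho A t \<le> 1"
    using vnorm_less_ennrealD[OF assms[unfolded wnorm_def]] unfolding rho_def by auto
  then show ?thesis
    using rho_antimono[of t l A] by simp
qed

lemma wnorm_finite_imp_rho_le_1:
  assumes "wnorm A < \<infinity>"
  obtains t where "0 < t" "rho A t \<le> 1"
proof
  show "0 < enn2real (wnorm A) + 1"
    by (simp add: add_nonneg_pos)
  have "wnorm A < ennreal (enn2real (wnorm A) + 1)"
    using assms by (cases "wnorm A") (auto simp: ennreal_less_iff)
  then show "rho A (enn2real (wnorm A) + 1) \<le> 1"
    by (rule rho_le_1_if_wnorm_less)
qed

lemma wnorm_mono: "A \<subseteq> B \<Longrightarrow> wnorm A \<le> wnorm B"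
  unfolding wnorm_def vnorm_def
  by (intro INF_superset_mono) (auto simp flip: rho_def intro: order_trans rho_mono)

lemma W_le_if_wnorm_less:
  assumes "A \<in> sets M" "1 \<le> l" "wnorm A < ennreal l"
  shows "W A \<le> ennreal (l powr P)"
proof -
  have "W A \<le> ennreal (l powr P) * rho A (l * 1)"
    unfolding W_eq_rho using assms by (intro rho_scale_ge) auto
  also have "\<dots> \<le> ennreal (l powr P)"
    using rho_le_1_if_wnorm_less[OF assms(3)] by (simp add: mult_left_le)
  finally show ?thesis .
qed

lemma rho_le_if_wnorm_less:
  assumes "A \<in> sets M" "0 < l" "l \<le> n" "wnorm A < ennreal l"
  shows "rho A n \<le> ennreal (l / n)"
proof -
  have "rho A ((n / l) * l) \<le> ennreal (1 / (n / l)) * rho A l"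
    using assms by (intro rho_scale_le) auto
  also have "\<dots> \<le> ennreal (l / n)"
    using rho_le_1_if_wnorm_less[OF assms(4)] by (simp add: mult_left_le)
  finally show ?thesis
    using assms by simp
qed

lemma wnorm_finite_if_W_finite:
  assumes "A \<in> sets M" "W A < \<infinity>"
  shows "wnorm A < \<infinity>"
proof -
  define a where "a = max 1 (enn2real (W A))"
  have "rho A (a * 1) \<le> ennreal (1 / a) * W A"
    unfolding W_eq_rho using assms by (intro rho_scale_le) (auto simp: a_def)
  also have "\<dots> \<le> 1"
    using assms by (cases "W A") (auto simp: a_def ennreal_mult[symmetric] field_simps)
  finally have "wnorm A \<le> ennreal a"
    by (intro wnorm_le) (auto simp: a_def)
  then show ?thesis
    by (rule le_less_trans) simp
qed

lemma rho_at_wnorm_ge: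
  assumes "A \<in> sets M" "wnorm A = ennreal n" "0 < n"
  shows "ennreal (2 powr -P) \<le> rho A n"
proof -
  have "1 < rho A (n / 2)"
  proof (rule ccontr)
    assume "\<not> 1 < rho A (n / 2)"
    then have "wnorm A \<le> ennreal (n / 2)"
      using assms by (intro wnorm_le) auto
    then show False
      using assms by (simp add: ennreal_le_iff)
  qed
  also have "rho A (n / 2) \<le> ennreal (2 powr P) * rho A (2 * (n / 2))"
    using assms by (intro rho_scale_ge) auto
  finally have "ennreal (2 powr -P) * 1 \<le> ennreal (2 powr -P) * (ennreal (2 powr P) * rho A n)"
    by (intro mult_left_mono) auto
  then show ?thesis
    by (simp add: ennreal_mult[symmetric] powr_minus mult.assoc[symmetric])
qed

lemma rho_at_wnorm_le:
  assumes "A \<in> sets M" "wnorm A = ennreal n" "0 < n"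
  shows "rho A n \<le> ennreal (2 powr P)"
proof -
  have "rho A n \<le> ennreal (2 powr P) * rho A (2 * n)"
    using assms by (intro rho_scale_ge) auto
  also have "\<dots> \<le> ennreal (2 powr P)"
    using assms by (intro mult_left_le rho_le_1_if_wnorm_less) (auto simp: ennreal_less_iff)
  finally show ?thesis .
qed

lemma W_bounds_at_wnorm:
  assumes "A \<in> sets M" "wnorm A = ennreal n" "1 \<le> n"
  shows "ennreal (2 powr -P) \<le> W A" "W A \<le> ennreal ((2 * n) powr P)"
proof -
  have "ennreal (2 powr -P) \<le> rho A n"
    using assms by (intro rho_at_wnorm_ge) auto
  also have "\<dots> \<le> W A"
    unfolding W_eq_rho using assms by (intro rho_antimono) auto
  finally show "ennreal (2 powr -P) \<le> W A" .
  show "W A \<le> ennreal ((2 * n) powr P)"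
    using assms by (intro W_le_if_wnorm_less) (auto simp: ennreal_less_iff)
qed

lemma comparable_if_wnorm_infinite:
  assumes "A \<in> sets M" "wnorm A = \<infinity>" "0 < C"
  shows "comparable c C (wnorm A) (epowr (W A) e)"
proof -
  have "W A = \<infinity>"
    using wnorm_finite_if_W_finite[OF assms(1)] assms(2) by (auto simp flip: less_top)
  then show ?thesis
    using assms by (simp add: comparable_def epowr_def ennreal_mult_top)
qed

lemma comparable_if_wnorm_bounded:
  assumes bounded: "\<And>A. A \<in> sets M \<Longrightarrow> wnorm A \<le> ennreal N1"
  shows "\<exists>c C. 0 < c \<and> 0 < C \<and>
    (\<forall>A\<in>sets M. 1 \<le> wnorm A \<longrightarrow> comparable c C (wnorm A) (epowr (W A) e))"
proof -
  define N where "N = max 1 N1"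
  define a where "a = 2 powr -P"
  define b where "b = (2 * N) powr P"
  define lo where "lo = min (a powr e) (b powr e)"
  define hi where "hi = max (a powr e) (b powr e)"
  have "0 < a" "0 < lo" "0 < hi"
    by (auto simp: a_def b_def N_def lo_def hi_def less_max_iff_disj)
  have "comparable (1 / hi) (N / lo) (wnorm A) (epowr (W A) e)"
    if A: "A \<in> sets M" "1 \<le> wnorm A" for A
  proof -
    obtain n where n: "wnorm A = ennreal n" "1 \<le> n" "n \<le> N"
      using bounded[OF A(1)] A by (cases "wnorm A") (auto simp: N_def ennreal_le_iff2 top_unique split: if_splits)
    moreover have "(2 * n) powr P \<le> b"
      unfolding b_def using n one_le_P by (intro powr_mono2) auto
    ultimately obtain v where v: "W A = ennreal v" "a \<le> v" "v \<le> b"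
      using W_bounds_at_wnorm[OF A(1) n(1,2)]
      by (cases "W A") (auto simp: a_def ennreal_le_iff top_unique)
    have "lo \<le> v powr e" "v powr e \<le> hi"
      unfolding lo_def hi_def using powr_between_min_max[OF \<open>0 < a\<close> v(2,3)] by auto
    then have "1 / hi * v powr e \<le> 1" "n \<le> N / lo * v powr e"
      using n \<open>0 < lo\<close> \<open>0 < hi\<close> mult_mono[of n N lo "v powr e"]
      by (auto simp: field_simps)
    then have "1 / hi * v powr e \<le> n" "n \<le> N / lo * v powr e"
      using n(2) by linarith+
    then show ?thesis
      unfolding n(1) v(1) using v \<open>0 < a\<close> n \<open>0 < lo\<close> \<open>0 < hi\<close>
      by (simp add: epowr_ennreal comparable_ennreal_iff)
  qed
  then show ?thesis
    using \<open>0 < lo\<close> \<open>0 < hi\<close> N_def by (intro exI[of _ "1 / hi"] exI[of _ "N / lo"]) auto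
qed

end

section \<open>Log-Hoelder decay at infinity\<close>

locale log_Hoelder_weight = exponent_weight +
  fixes d :: "'a \<Rightarrow> 'a \<Rightarrow> real" and x0 :: 'a and pinf Cinf :: real
  assumes log_Hoelder_infinity: "\<bar>q x - pinf\<bar> * ln (exp 1 + d x0 x) \<le> Cinf"
    and qball_x0_measurable [measurable]: "qball d x0 r \<in> sets M"

locale log_Hoelder_growth = log_Hoelder_weight +
  fixes D \<kappa> :: real
  assumes pinf_pos: "0 < pinf" and D_pos: "0 < D" and \<kappa>_nonneg: "0 \<le> \<kappa>"
    and ball_growth: "1 \<le> R \<Longrightarrow> wnorm (qball d x0 R) \<le> ennreal (D * R powr \<kappa>)"
begin

(* The ball B(x0, n^delta) has norm O(n^(delta kappa)): this must be o(n), and its W-measure,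
  of order n^(delta kappa P), must be O(n^pinf). *)
definition \<delta> :: real where
  "\<delta> = min (1 / (2 * (\<kappa> + 1))) (pinf / ((\<kappa> + 1) * P))"

definition \<Lambda> :: real where
  "\<Lambda> = exp (Cinf / \<delta>)"

definition N0 :: real where
  "N0 = (2 powr (P + 1) * (D + 1))\<^sup>2"

lemma \<Lambda>_pos: "0 < \<Lambda>"
  by (simp add: \<Lambda>_def)

lemma one_le_N0: "1 \<le> N0"
proof -
  have "1 \<le> 2 powr (P + 1) * (D + 1)"
    using one_le_P D_pos mult_mono[of 1 "2 powr (P + 1)" 1 "D + 1"] by (simp add: ge_one_powr_ge_zero)
  then show ?thesis
    unfolding N0_def by (simp add: one_le_power)
qed

lemma \<delta>_pos: "0 < \<delta>"
  using \<kappa>_nonneg pinf_pos one_le_P by (simp add: \<delta>_def)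

lemma \<delta>_\<kappa>_le: "\<delta> * \<kappa> \<le> 1 / 2" "\<delta> * \<kappa> * P \<le> pinf"
proof -
  have "\<delta> * \<kappa> \<le> \<delta> * (\<kappa> + 1)"
    using \<delta>_pos by simp
  also have "\<dots> \<le> 1 / (2 * (\<kappa> + 1)) * (\<kappa> + 1)"
    using \<kappa>_nonneg by (intro mult_right_mono) (auto simp: \<delta>_def)
  also have "\<dots> = 1 / 2"
    using \<kappa>_nonneg by (simp add: field_simps)
  finally show "\<delta> * \<kappa> \<le> 1 / 2" .
  have "\<delta> * \<kappa> * P \<le> \<delta> * ((\<kappa> + 1) * P)"
    using \<delta>_pos one_le_P by (simp add: algebra_simps)
  also have "\<dots> \<le> pinf / ((\<kappa> + 1) * P) * ((\<kappa> + 1) * P)"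
    using \<kappa>_nonneg one_le_P by (intro mult_right_mono) (auto simp: \<delta>_def)
  also have "\<dots> = pinf"
    using \<kappa>_nonneg one_le_P by simp
  finally show "\<delta> * \<kappa> * P \<le> pinf" .
qed

lemma far_exponent_bound:
  assumes "x \<notin> qball d x0 (n powr \<delta>)" "1 \<le> n"
  shows "\<bar>q x - pinf\<bar> * \<bar>ln n\<bar> \<le> Cinf / \<delta>"
proof -
  have "0 < n powr \<delta>"
    using assms by simp
  have "\<delta> * ln n = ln (n powr \<delta>)"
    using assms by (simp add: ln_powr)
  also have "\<dots> \<le> ln (exp 1 + d x0 x)"
  proof -
    have "n powr \<delta> \<le> d x0 x"
      using assms(1) by (simp add: qball_def)
    moreover have "0 < exp (1::real)"
      by simp
    ultimately have "n powr \<delta> \<le> exp 1 + d x0 x"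
      by linarith
    then show ?thesis
      using \<open>0 < n powr \<delta>\<close> by (rule ln_mono)
  qed
  finally have "\<bar>q x - pinf\<bar> * (\<delta> * ln n) \<le> Cinf"
    using log_Hoelder_infinity[of x] by (meson abs_ge_zero mult_left_mono order_trans)
  then show ?thesis
    using assms \<delta>_pos by (simp add: field_simps)
qed

lemma far_powr_bounds:
  assumes "x \<notin> qball d x0 (n powr \<delta>)" "1 \<le> n"
  shows "n powr - q x \<le> \<Lambda> * n powr - pinf" "n powr q x \<le> \<Lambda> * n powr pinf"
  using far_exponent_bound[OF assms] assms unfolding \<Lambda>_def
  by (auto intro!: powr_le_exp_mult_powr simp: abs_minus_commute)

lemma rho_far_le:
  assumes "S \<in> sets M" "S \<inter> qball d x0 (n powr \<delta>) = {}" "1 \<le> n"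
  shows "rho S n \<le> ennreal (\<Lambda> * n powr - pinf) * W S"
  unfolding W_eq_rho using assms far_powr_bounds(1)[of _ n]
  by (intro rho_le_cmult_rho) (auto simp: powr_divide powr_minus_divide \<Lambda>_def)

lemma W_far_le:
  assumes "S \<in> sets M" "S \<inter> qball d x0 (n powr \<delta>) = {}" "1 \<le> n"
  shows "W S \<le> ennreal (\<Lambda> * n powr pinf) * rho S n"
  unfolding W_eq_rho using assms far_powr_bounds(2)[of _ n]
  by (intro rho_le_cmult_rho) (auto simp: \<Lambda>_def)

lemma wnorm_near_ball_less:
  assumes "1 \<le> n"
  shows "wnorm (qball d x0 (n powr \<delta>)) < ennreal ((D + 1) * n powr (\<delta> * \<kappa>))"
proof -
  have "wnorm (qball d x0 (n powr \<delta>)) \<le> ennreal (D * (n powr \<delta>) powr \<kappa>)"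
    using assms \<delta>_pos by (intro ball_growth) (simp add: ge_one_powr_ge_zero)
  also have "\<dots> < ennreal (D * (n powr \<delta>) powr \<kappa> + 1)"
    using D_pos by (simp add: ennreal_less_iff)
  also have "D * (n powr \<delta>) powr \<kappa> + 1 \<le> (D + 1) * n powr (\<delta> * \<kappa>)"
    using assms \<delta>_pos \<kappa>_nonneg by (simp add: powr_powr algebra_simps ge_one_powr_ge_zero)
  finally show ?thesis
    by (simp add: ennreal_leI)
qed

lemma W_near_le:
  assumes "T \<in> sets M" "T \<subseteq> qball d x0 (n powr \<delta>)" "1 \<le> n"
  shows "W T \<le> ennreal ((D + 1) powr P * n powr pinf)"
proof -
  have "W T \<le> W (qball d x0 (n powr \<delta>))"
    unfolding W_eq_rho using assms by (intro rho_mono) auto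
  also have "\<dots> \<le> ennreal (((D + 1) * n powr (\<delta> * \<kappa>)) powr P)"
  proof (intro W_le_if_wnorm_less qball_x0_measurable wnorm_near_ball_less \<open>1 \<le> n\<close>)
    have "1 \<le> n powr (\<delta> * \<kappa>)"
      using assms \<delta>_pos \<kappa>_nonneg by (simp add: ge_one_powr_ge_zero)
    then show "1 \<le> (D + 1) * n powr (\<delta> * \<kappa>)"
      using D_pos mult_mono[of 1 "D + 1" 1 "n powr (\<delta> * \<kappa>)"] by simp
  qed
  also have "((D + 1) * n powr (\<delta> * \<kappa>)) powr P = (D + 1) powr P * n powr (\<delta> * \<kappa> * P)"
    using assms D_pos by (simp add: powr_mult powr_powr)
  also have "\<dots> \<le> (D + 1) powr P * n powr pinf"
    using assms D_pos \<delta>_\<kappa>_le by (intro mult_left_mono powr_mono) auto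
  finally show ?thesis
    by (simp add: ennreal_leI order_trans)
qed

lemma rho_near_le:
  assumes "T \<in> sets M" "T \<subseteq> qball d x0 (n powr \<delta>)" "N0 \<le> n"
  shows "rho T n \<le> ennreal (2 powr (- P - 1))"
proof -
  define l where "l = (D + 1) * n powr (\<delta> * \<kappa>)"
  have sqrt_n: "2 powr (P + 1) * (D + 1) \<le> sqrt n"
    using assms D_pos by (simp add: N0_def real_le_rsqrt)
  have "1 \<le> 2 powr (P + 1)"
    using one_le_P by (simp add: ge_one_powr_ge_zero)
  then have "1 \<le> sqrt n"
    using sqrt_n D_pos by (smt (verit) mult_le_cancel_right1)
  then have "1 \<le> n"
    by simp
  have "n powr (\<delta> * \<kappa>) \<le> sqrt n"
    using \<open>1 \<le> n\<close> \<delta>_\<kappa>_le by (simp add: powr_half_sqrt[symmetric] powr_mono)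
  then have "l * 2 powr (P + 1) \<le> (2 powr (P + 1) * (D + 1)) * sqrt n"
    unfolding l_def using D_pos by (simp add: mult_left_mono mult_ac)
  also have "\<dots> \<le> sqrt n * sqrt n"
    using sqrt_n \<open>1 \<le> n\<close> by (intro mult_right_mono) auto
  finally have l_le: "l * 2 powr (P + 1) \<le> n"
    using \<open>1 \<le> n\<close> by simp
  have "0 < l"
    using D_pos \<open>1 \<le> n\<close> by (simp add: l_def)
  have "rho T n \<le> rho (qball d x0 (n powr \<delta>)) n"
    using assms \<open>1 \<le> n\<close> by (intro rho_mono) auto
  also have "\<dots> \<le> ennreal (l / n)"
  proof (rule rho_le_if_wnorm_less[OF qball_x0_measurable \<open>0 < l\<close>])
    show "l \<le> n"
      using l_le \<open>1 \<le> 2 powr (P + 1)\<close> \<open>0 < l\<close> by (smt (verit) mult_le_cancel_left1)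
    show "wnorm (qball d x0 (n powr \<delta>)) < ennreal l"
      unfolding l_def using \<open>1 \<le> n\<close> by (rule wnorm_near_ball_less)
  qed
  also have "l / n \<le> 2 powr (- P - 1)"
    using l_le \<open>1 \<le> n\<close> by (simp add: field_simps powr_diff powr_minus powr_add)
  finally show ?thesis
    by (simp add: ennreal_leI order_trans)
qed

lemma W_le_at_wnorm:
  assumes [measurable]: "B \<in> sets M" "wnorm B = ennreal n" "1 \<le> n"
  shows "W B \<le> ennreal ((\<Lambda> * 2 powr P + (D + 1) powr P) * n powr pinf)"
proof -
  define S where "S = B - qball d x0 (n powr \<delta>)"
  define T where "T = B \<inter> qball d x0 (n powr \<delta>)"
  have [measurable]: "S \<in> sets M" "T \<in> sets M"
    unfolding S_def T_def by measurable
  have "W B = W S + W T"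
    unfolding W_eq_rho S_def T_def by (intro rho_split) auto
  also have "W S \<le> ennreal (\<Lambda> * n powr pinf * 2 powr P)"
  proof -
    have "W S \<le> ennreal (\<Lambda> * n powr pinf) * rho S n"
      using assms by (intro W_far_le) (auto simp: S_def)
    also have "\<dots> \<le> ennreal (\<Lambda> * n powr pinf) * ennreal (2 powr P)"
      using assms rho_at_wnorm_le[of B n] rho_mono[of S B n]
      by (intro mult_left_mono) (auto simp: S_def)
    finally show ?thesis
      using \<Lambda>_pos by (simp add: ennreal_mult)
  qed
  also have "W T \<le> ennreal ((D + 1) powr P * n powr pinf)"
    using assms by (intro W_near_le) (auto simp: T_def)
  finally show ?thesis
    using \<Lambda>_pos D_pos by (simp add: ennreal_plus[symmetric] algebra_simps del: ennreal_plus)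
qed

lemma powr_le_W_at_wnorm:
  assumes [measurable]: "B \<in> sets M" "wnorm B = ennreal n" "N0 \<le> n" "W B = ennreal v" "0 \<le> v"
  shows "n powr pinf \<le> \<Lambda> * 2 powr (P + 1) * v"
proof -
  have "1 \<le> n"
    using assms one_le_N0 by simp
  define S where "S = B - qball d x0 (n powr \<delta>)"
  define T where "T = B \<inter> qball d x0 (n powr \<delta>)"
  have [measurable]: "S \<in> sets M" "T \<in> sets M"
    unfolding S_def T_def by measurable
  have "ennreal (2 powr - P) \<le> rho B n"
    using assms \<open>1 \<le> n\<close> by (intro rho_at_wnorm_ge) auto
  also have "rho B n = rho S n + rho T n"
    unfolding S_def T_def using \<open>1 \<le> n\<close> by (intro rho_split) auto
  also have "\<dots> \<le> ennreal (\<Lambda> * n powr - pinf) * W S + ennreal (2 powr (- P - 1))"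
    using assms \<open>1 \<le> n\<close> by (intro add_mono rho_far_le rho_near_le) (auto simp: S_def T_def)
  also have "W S \<le> ennreal v"
    unfolding W_eq_rho assms(4)[symmetric] using \<open>1 \<le> n\<close> by (intro rho_mono) (auto simp: S_def)
  finally have "2 powr - P \<le> \<Lambda> * n powr - pinf * v + 2 powr (- P - 1)"
    using \<Lambda>_pos \<open>0 \<le> v\<close>
    by (simp add: ennreal_mult[symmetric] ennreal_plus[symmetric] ennreal_le_iff mult_left_mono
        del: ennreal_plus)
  moreover have "2 powr - P = 2 * 2 powr (- P - 1)"
    by (simp add: powr_diff)
  ultimately have "2 powr (- P - 1) \<le> \<Lambda> * n powr - pinf * v"
    by simp
  then show ?thesis
    using \<open>1 \<le> n\<close> by (simp add: powr_minus powr_diff powr_add field_simps)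
qed

lemma W_powr_le_wnorm:
  assumes "B \<in> sets M" "wnorm B = ennreal n" "1 \<le> n" "W B = ennreal v" "0 \<le> v"
  shows "v powr (1 / pinf) \<le> (\<Lambda> * 2 powr P + (D + 1) powr P) powr (1 / pinf) * n"
proof -
  define U where "U = \<Lambda> * 2 powr P + (D + 1) powr P"
  have "0 < U"
    using \<Lambda>_pos D_pos by (simp add: U_def add_pos_pos)
  have "v \<le> U * n powr pinf"
    using W_le_at_wnorm[OF assms(1-3)] assms(4,5) \<open>0 < U\<close> by (simp add: U_def ennreal_le_iff)
  then have "v powr (1 / pinf) \<le> (U * n powr pinf) powr (1 / pinf)"
    using assms pinf_pos by (intro powr_mono2) auto
  also have "\<dots> = U powr (1 / pinf) * n"
    using assms \<open>0 < U\<close> pinf_pos by (simp add: powr_mult powr_powr)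
  finally show ?thesis
    by (simp add: U_def)
qed

lemma wnorm_le_W_powr:
  assumes "B \<in> sets M" "wnorm B = ennreal n" "1 \<le> n" "W B = ennreal v" "0 \<le> v"
  shows "n \<le> max ((\<Lambda> * 2 powr (P + 1)) powr (1 / pinf)) (N0 * 2 powr (P / pinf)) * v powr (1 / pinf)"
proof (cases "N0 \<le> n")
  case True
  have "n \<le> (\<Lambda> * 2 powr (P + 1) * v) powr (1 / pinf)"
    using assms True pinf_pos by (intro le_powr_inverse_if_powr_le powr_le_W_at_wnorm) auto
  also have "\<dots> = (\<Lambda> * 2 powr (P + 1)) powr (1 / pinf) * v powr (1 / pinf)"
    using \<Lambda>_pos assms by (simp add: powr_mult)
  also have "\<dots> \<le> max ((\<Lambda> * 2 powr (P + 1)) powr (1 / pinf)) (N0 * 2 powr (P / pinf)) * v powr (1 / pinf)"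
    by (intro mult_right_mono) auto
  finally show ?thesis .
next
  case False
  have "2 powr - P \<le> v"
    using W_bounds_at_wnorm(1)[OF assms(1-3)] assms(4,5) by (simp add: ennreal_le_iff)
  then have "(2 powr - P) powr (1 / pinf) \<le> v powr (1 / pinf)"
    using pinf_pos by (intro powr_mono2) auto
  then have "N0 * 2 powr (P / pinf) * (2 powr - P) powr (1 / pinf) \<le> N0 * 2 powr (P / pinf) * v powr (1 / pinf)"
    using one_le_N0 by (intro mult_left_mono) auto
  moreover have "N0 * 2 powr (P / pinf) * (2 powr - P) powr (1 / pinf) = N0"
    by (simp add: powr_powr mult.assoc powr_add[symmetric])
  ultimately have "n \<le> N0 * 2 powr (P / pinf) * v powr (1 / pinf)"
    using False by linarith
  also have "\<dots> \<le> max ((\<Lambda> * 2 powr (P + 1)) powr (1 / pinf)) (N0 * 2 powr (P / pinf)) * v powr (1 / pinf)"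
    by (intro mult_right_mono) auto
  finally show ?thesis .
qed

theorem comparable_wnorm_W_powr:
  "\<exists>c C. 0 < c \<and> 0 < C \<and>
    (\<forall>B\<in>sets M. 1 \<le> wnorm B \<longrightarrow> comparable c C (wnorm B) (epowr (W B) (1 / pinf)))"
proof (intro exI conjI ballI impI)
  define c where "c = 1 / (\<Lambda> * 2 powr P + (D + 1) powr P) powr (1 / pinf)"
  define C where "C = max ((\<Lambda> * 2 powr (P + 1)) powr (1 / pinf)) (N0 * 2 powr (P / pinf))"
  have "0 < \<Lambda> * 2 powr P + (D + 1) powr P"
    using \<Lambda>_pos D_pos by (simp add: add_pos_pos)
  then show "0 < c" "0 < C"
    using \<Lambda>_pos by (auto simp: c_def C_def less_max_iff_disj)
  fix B assume B: "B \<in> sets M" "1 \<le> wnorm B"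
  show "comparable c C (wnorm B) (epowr (W B) (1 / pinf))"
  proof (cases "wnorm B = \<infinity>")
    case True
    then show ?thesis
      using B \<open>0 < C\<close> by (intro comparable_if_wnorm_infinite) auto
  next
    case False
    then obtain n where n: "wnorm B = ennreal n" "1 \<le> n"
      using B by (cases "wnorm B") (auto simp: ennreal_le_iff2 split: if_splits)
    then obtain v where v: "W B = ennreal v" "0 \<le> v"
      using W_bounds_at_wnorm(2)[OF B(1) n] by (cases "W B") (auto simp: top_unique)
    show ?thesis
      using W_powr_le_wnorm[OF B(1) n v] wnorm_le_W_powr[OF B(1) n v] \<open>0 < c\<close> \<open>0 < C\<close> v n
      unfolding n(1) v(1) C_def[symmetric]
      by (simp add: epowr_ennreal comparable_ennreal_iff c_def field_simps)
  qed
qed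

end

section \<open>Spaces of homogeneous type\<close>

lemma doubling_growth_powr:
  fixes f :: "real \<Rightarrow> ennreal"
  assumes "mono f" and doubling: "\<And>r. 1 \<le> r \<Longrightarrow> f (2 * r) \<le> ennreal C * f r"
    and "1 \<le> C" "1 \<le> R"
  shows "f R \<le> ennreal (C * R powr log 2 C) * f 1"
proof -
  have pow: "f (2 ^ k) \<le> ennreal (C ^ k) * f 1" for k
  proof (induction k)
    case (Suc k)
    have "f (2 ^ Suc k) \<le> ennreal C * f (2 ^ k)"
      using doubling[of "2 ^ k"] by simp
    also have "\<dots> \<le> ennreal C * (ennreal (C ^ k) * f 1)"
      using Suc by (rule mult_left_mono) simp
    finally show ?case
      using \<open>1 \<le> C\<close> by (simp add: ennreal_mult mult.assoc)
  qed simp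
  define k where "k = nat \<lceil>log 2 R\<rceil>"
  have "log 2 R \<le> k" "k \<le> log 2 R + 1"
    using \<open>1 \<le> R\<close> by (auto simp: k_def)
  have "R \<le> 2 ^ k"
    using \<open>log 2 R \<le> k\<close> \<open>1 \<le> R\<close> by (simp add: log_le_iff powr_realpow)
  then have "f R \<le> ennreal (C ^ k) * f 1"
    using \<open>mono f\<close> pow by (metis monoD order_trans)
  also have "C ^ k \<le> C * R powr log 2 C"
  proof -
    have "C ^ k = C powr k"
      using \<open>1 \<le> C\<close> by (simp add: powr_realpow)
    also have "\<dots> \<le> C powr (log 2 R + 1)"
      using \<open>k \<le> log 2 R + 1\<close> \<open>1 \<le> C\<close> by (intro powr_mono) auto
    also have "\<dots> = C * C powr log 2 R"
      using \<open>1 \<le> C\<close> by (simp add: powr_add)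
    also have "C powr log 2 R = R powr log 2 C"
      using \<open>1 \<le> C\<close> \<open>1 \<le> R\<close> by (simp add: powr_def log_def)
    finally show ?thesis .
  qed
  then have "ennreal (C ^ k) * f 1 \<le> ennreal (C * R powr log 2 C) * f 1"
    by (intro mult_right_mono ennreal_leI) auto
  finally show ?thesis .
qed

lemma qball_mono: "r \<le> s \<Longrightarrow> qball d x r \<subseteq> qball d x s"
  by (auto simp: qball_def)

lemma qball_subset_qball:
  assumes "quasi_metric d A0"
  shows "qball d y r \<subseteq> qball d x (A0 * (d x y + r))"
proof
  fix z assume "z \<in> qball d y r"
  then have "d x z \<le> A0 * (d x y + d y z)" "d y z < r"
    using assms by (auto simp: quasi_metric_def qball_def)
  moreover have "1 \<le> A0"
    using assms by (simp add: quasi_metric_def)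
  ultimately show "z \<in> qball d x (A0 * (d x y + r))"
    by (auto simp: qball_def intro: order.strict_trans1)
qed

locale homogeneous_Ap_weight = log_Hoelder_weight +
  fixes A0 C\<mu> K :: real
  assumes quasi_metric: "quasi_metric d A0"
    and qball_measurable [measurable]: "qball d x r \<in> sets M"
    and doubling: "0 < r \<Longrightarrow> 0 < emeasure M (qball d x (2 * r)) \<and>
      emeasure M (qball d x (2 * r)) \<le> ennreal C\<mu> * emeasure M (qball d x r) \<and>
      emeasure M (qball d x r) < \<infinity>"
    and w_pos: "AE x in M. 0 < w x"
    and Ap_qball: "vnorm M (\<lambda>x. ereal (q x)) (\<lambda>y. w y * indicator (qball d x r) y)
      * vnorm M (conj_exp (\<lambda>x. ereal (q x))) (\<lambda>y. inverse (w y) * indicator (qball d x r) y)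
      \<le> ennreal K * emeasure M (qball d x r)"
begin

lemma emeasure_qball_pos: "0 < r \<Longrightarrow> 0 < emeasure M (qball d x r)"
  using doubling[of "r / 2" x] by simp

lemma emeasure_qball_finite: "0 < r \<Longrightarrow> emeasure M (qball d x r) < \<infinity>"
  using doubling by blast

lemma emeasure_qball_growth:
  assumes "1 \<le> R"
  shows "emeasure M (qball d x R)
    \<le> ennreal (max C\<mu> 1 * R powr log 2 (max C\<mu> 1)) * emeasure M (qball d x 1)"
proof (rule doubling_growth_powr)
  show "mono (\<lambda>r. emeasure M (qball d x r))"
    by (intro monoI emeasure_mono qball_measurable qball_mono)
  fix r :: real assume "1 \<le> r"
  then have "emeasure M (qball d x (2 * r)) \<le> ennreal C\<mu> * emeasure M (qball d x r)"
    using doubling[of r x] by simp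
  also have "\<dots> \<le> ennreal (max C\<mu> 1) * emeasure M (qball d x r)"
    by (intro mult_right_mono ennreal_leI) auto
  finally show "emeasure M (qball d x (2 * r)) \<le> ennreal (max C\<mu> 1) * emeasure M (qball d x r)" .
qed (use assms in auto)

lemma wnorm_mult_emeasure_le:
  assumes "E \<in> sets M" "E \<subseteq> qball d x r" "0 < t" "rho E t \<le> 1"
  shows "wnorm (qball d x r) * emeasure M E \<le> 2 * ennreal t * (ennreal K * emeasure M (qball d x r))"
proof -
  have "wnorm (qball d x r) * emeasure M E
      \<le> wnorm (qball d x r) * (2 * ennreal t
        * vnorm M (conj_exp (\<lambda>x. ereal (q x))) (\<lambda>y. inverse (w y) * indicator (qball d x r) y))"
    using assms w_pos by (intro mult_left_mono emeasure_le_Hoelder) auto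
  also have "\<dots> = 2 * ennreal t * (wnorm (qball d x r)
      * vnorm M (conj_exp (\<lambda>x. ereal (q x))) (\<lambda>y. inverse (w y) * indicator (qball d x r) y))"
    by (simp add: mult_ac)
  also have "\<dots> \<le> 2 * ennreal t * (ennreal K * emeasure M (qball d x r))"
    using Ap_qball[folded wnorm_def] by (rule mult_left_mono) simp
  finally show ?thesis .
qed

lemma wnorm_qball_finite_if_subset:
  assumes "E \<in> sets M" "E \<subseteq> qball d x r" "0 < r" "0 < emeasure M E" "wnorm E < \<infinity>"
  shows "wnorm (qball d x r) < \<infinity>"
proof (rule ccontr)
  assume "\<not> wnorm (qball d x r) < \<infinity>"
  then have "wnorm (qball d x r) * emeasure M E = \<infinity>"
    using assms(4) by (auto simp: ennreal_mult_eq_top_iff less_top[symmetric])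
  moreover obtain t where "0 < t" "rho E t \<le> 1"
    using assms(5) by (rule wnorm_finite_imp_rho_le_1)
  moreover note wnorm_mult_emeasure_le[OF assms(1,2) \<open>0 < t\<close> \<open>rho E t \<le> 1\<close>]
  ultimately have "\<infinity> \<le> 2 * ennreal t * (ennreal K * emeasure M (qball d x r))"
    by simp
  then show False
    using emeasure_qball_finite[OF assms(3), of x]
    by (auto simp: top_unique ennreal_mult_eq_top_iff)
qed

lemma wnorm_qball_finite:
  assumes "0 < r" "wnorm (qball d y r) < \<infinity>" "0 < s"
  shows "wnorm (qball d x s) < \<infinity>"
proof -
  define R where "R = max s (A0 * (d x y + r))"
  have "qball d y r \<subseteq> qball d x (A0 * (d x y + r))"
    by (rule qball_subset_qball[OF quasi_metric])
  also have "\<dots> \<subseteq> qball d x R"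
    by (rule qball_mono) (simp add: R_def)
  finally have "wnorm (qball d x R) < \<infinity>"
    using assms emeasure_qball_pos by (intro wnorm_qball_finite_if_subset) (auto simp: R_def)
  moreover have "wnorm (qball d x s) \<le> wnorm (qball d x R)"
    by (intro wnorm_mono qball_mono) (simp add: R_def)
  ultimately show ?thesis
    by (simp add: le_less_trans)
qed

lemma wnorm_ball_growth:
  assumes "0 < r" "wnorm (qball d y r) < \<infinity>"
  obtains D \<kappa> where "0 < D" "0 \<le> \<kappa>"
    "\<And>R. 1 \<le> R \<Longrightarrow> wnorm (qball d x0 R) \<le> ennreal (D * R powr \<kappa>)"
proof -
  have "wnorm (qball d x0 1) < \<infinity>"
    using assms by (rule wnorm_qball_finite) simp
  then obtain t where t: "0 < t" "rho (qball d x0 1) t \<le> 1"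
    by (rule wnorm_finite_imp_rho_le_1)
  define C where "C = max C\<mu> 1"
  define D where "D = 2 * t * max K 1 * C"
  have "1 \<le> C"
    by (simp add: C_def)
  have "wnorm (qball d x0 R) \<le> ennreal (D * R powr log 2 C)" if "1 \<le> R" for R
  proof -
    have m1: "0 < emeasure M (qball d x0 1)" "emeasure M (qball d x0 1) < \<infinity>"
      using emeasure_qball_pos emeasure_qball_finite by auto
    have "wnorm (qball d x0 R) * emeasure M (qball d x0 1)
        \<le> 2 * ennreal t * (ennreal K * emeasure M (qball d x0 R))"
      using that by (intro wnorm_mult_emeasure_le qball_measurable qball_mono t)
    then have "emeasure M (qball d x0 1) * wnorm (qball d x0 R)
        \<le> 2 * ennreal t * (ennreal K * emeasure M (qball d x0 R))"
      by (metis mult.commute)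
    also have "\<dots> \<le> 2 * ennreal t
        * (ennreal (max K 1) * (ennreal (C * R powr log 2 C) * emeasure M (qball d x0 1)))"
      using emeasure_qball_growth[OF that, of x0]
      by (intro mult_left_mono mult_mono ennreal_leI) (auto simp: C_def)
    also have "\<dots> = emeasure M (qball d x0 1) * ennreal (D * R powr log 2 C)"
      using t \<open>1 \<le> C\<close> by (simp add: D_def ennreal_mult mult_ac)
    finally show ?thesis
      using m1 by (simp add: ennreal_mult_le_mult_iff)
  qed
  moreover have "0 < D" "0 \<le> log 2 C"
    using t \<open>1 \<le> C\<close> by (auto simp: D_def)
  ultimately show ?thesis
    using that by blast
qed

lemma qball_x0_eq_UNIV_if_pinf_nonpos:
  assumes "pinf \<le> 0"
  shows "qball d x0 (exp Cinf) = UNIV"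
proof -
  have "d x0 x < exp Cinf" for x
  proof -
    have "0 \<le> d x0 x"
      using quasi_metric by (simp add: quasi_metric_def)
    then have "1 \<le> ln (exp 1 + d x0 x)"
      by (subst ln_ge_iff) (auto intro: add_pos_nonneg)
    moreover have "1 \<le> \<bar>q x - pinf\<bar>"
      using assms one_le_q[of x] by simp
    ultimately have "ln (exp 1 + d x0 x) \<le> \<bar>q x - pinf\<bar> * ln (exp 1 + d x0 x)"
      by (simp add: mult_le_cancel_right1)
    also have "\<dots> \<le> Cinf"
      by (rule log_Hoelder_infinity)
    finally have "exp (ln (exp 1 + d x0 x)) \<le> exp Cinf"
      by simp
    then have "exp 1 + d x0 x \<le> exp Cinf"
      using \<open>0 \<le> d x0 x\<close> by (simp add: add_pos_nonneg)
    then show ?thesis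
      using exp_gt_zero[of 1] by linarith
  qed
  then show ?thesis
    by (auto simp: qball_def)
qed

lemma wnorm_bounded_if_pinf_nonpos:
  assumes "pinf \<le> 0"
    and growth: "\<And>R. 1 \<le> R \<Longrightarrow> wnorm (qball d x0 R) \<le> ennreal (D * R powr \<kappa>)"
  shows "wnorm A \<le> ennreal (D * max 1 (exp Cinf) powr \<kappa>)"
proof -
  have "A \<subseteq> qball d x0 (max 1 (exp Cinf))"
    using qball_x0_eq_UNIV_if_pinf_nonpos[OF assms(1)] qball_mono[of "exp Cinf" "max 1 (exp Cinf)" d x0]
    by auto
  then have "wnorm A \<le> wnorm (qball d x0 (max 1 (exp Cinf)))"
    by (rule wnorm_mono)
  also have "\<dots> \<le> ennreal (D * max 1 (exp Cinf) powr \<kappa>)"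
    by (rule growth) simp
  finally show ?thesis .
qed

theorem comparable_wnorm_W_powr_qball:
  "\<exists>c C. 0 < c \<and> 0 < C \<and> (\<forall>x r. 0 < r \<longrightarrow> 1 \<le> wnorm (qball d x r) \<longrightarrow>
    comparable c C (wnorm (qball d x r)) (epowr (W (qball d x r)) (1 / pinf)))"
proof (cases "\<exists>y r. 0 < r \<and> wnorm (qball d y r) < \<infinity>")
  case False
  then have "wnorm (qball d x r) = \<infinity>" if "0 < r" for x r
    using that by (auto simp flip: less_top)
  then show ?thesis
    by (intro exI[of _ 1] conjI allI impI comparable_if_wnorm_infinite qball_measurable) auto
next
  case True
  then obtain y r where "0 < r" "wnorm (qball d y r) < \<infinity>"
    by blast
  then obtain D \<kappa> where D: "0 < D" "0 \<le> \<kappa>"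
    and growth: "\<And>R. 1 \<le> R \<Longrightarrow> wnorm (qball d x0 R) \<le> ennreal (D * R powr \<kappa>)"
    by (rule wnorm_ball_growth) auto
  obtain c C where "0 < c" "0 < C"
    and "\<forall>B\<in>sets M. 1 \<le> wnorm B \<longrightarrow> comparable c C (wnorm B) (epowr (W B) (1 / pinf))"
  proof (cases "0 < pinf")
    case True
    interpret log_Hoelder_growth M q w P d x0 pinf Cinf D \<kappa>
      by unfold_locales (use True D growth in auto)
    show thesis
      using comparable_wnorm_W_powr that by blast
  next
    case False
    then show thesis
      using comparable_if_wnorm_bounded wnorm_bounded_if_pinf_nonpos[OF _ growth] that by force
  qed
  then show ?thesis
    using qball_measurable by blast
qed

end

lemma LHinf_real_exponent:
  assumes "exponent M p" "LHinf d p x0 pinf" "\<And>x y. 0 \<le> d x y" "\<And>x y. d x y = d y x"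
  obtains q Cinf where "p = (\<lambda>x. ereal (q x))" "q \<in> borel_measurable M" "\<And>x. 1 \<le> q x"
    "\<And>x. \<bar>q x - pinf\<bar> * ln (exp 1 + d x0 x) \<le> Cinf" "\<And>x. q x \<le> pinf + Cinf"
proof -
  obtain Cinf where LH: "\<And>x. \<bar>p x - ereal pinf\<bar> < ereal (Cinf / ln (exp 1 + d x0 x))"
    using assms(2,4) unfolding LHinf_def by metis
  define q where "q x = real_of_ereal (p x)" for x
  have p_eq: "p x = ereal (q x)" for x
    using LH[of x] assms(1) unfolding exponent_def q_def by (cases "p x") auto
  have ln_ge: "1 \<le> ln (exp 1 + d x0 x)" for x
    using assms(3)[of x0 x] by (subst ln_ge_iff) (auto intro: add_pos_nonneg)
  have q_LH: "\<bar>q x - pinf\<bar> * ln (exp 1 + d x0 x) \<le> Cinf" for x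
    using LH[of x] ln_ge[of x] by (simp add: p_eq pos_less_divide_eq)
  have "q x \<le> pinf + Cinf" for x
    using q_LH[of x] ln_ge[of x] mult_left_mono[of 1 "ln (exp 1 + d x0 x)" "\<bar>q x - pinf\<bar>"] by simp
  moreover have "q \<in> borel_measurable M"
  proof -
    have [measurable]: "p \<in> borel_measurable M"
      using assms(1) by (simp add: exponent_def)
    show ?thesis
      unfolding q_def by measurable
  qed
  moreover have "1 \<le> q x" for x
    using assms(1) p_eq[of x] unfolding exponent_def by (metis ereal_less_eq(3) one_ereal_def)
  ultimately show thesis
    using that[of q Cinf] p_eq q_LH by blast
qed

theorem corollary3p5:
  fixes d :: "'a \<Rightarrow> 'a \<Rightarrow> real" and M :: "'a measure" and p :: "'a \<Rightarrow> ereal"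
    and w :: "'a \<Rightarrow> real" and x0 :: 'a and pinf :: real
  assumes "homogeneous_type d M"
    and "exponent M p"
    and "LH0 d p" and "LHinf d p x0 pinf"
    and "Ap d M p w"
  shows "\<exists>c C. c > 0 \<and> C > 0 \<and> (\<forall>x r. r > 0 \<longrightarrow>
           vnorm M p (\<lambda>y. w y * indicator (qball d x r) y) \<ge> 1 \<longrightarrow>
           (let WB = (\<integral>\<^sup>+ y\<in>qball d x r. ennreal (w y powr real_of_ereal (p y)) \<partial>M)
            in ennreal c * epowr WB (1 / pinf)
                 \<le> vnorm M p (\<lambda>y. w y * indicator (qball d x r) y)
             \<and> vnorm M p (\<lambda>y. w y * indicator (qball d x r) y)
                 \<le> ennreal C * epowr WB (1 / pinf)))"
proof -
  obtain A0 C\<mu> where qm: "quasi_metric d A0"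
    and sets: "sets M = sigma_sets UNIV ({qball d x r | x r. True} \<union> {U. qopen d U})"
    and doubling: "\<forall>x r. 0 < r \<longrightarrow> 0 < emeasure M (qball d x (2 * r)) \<and>
      emeasure M (qball d x (2 * r)) \<le> ennreal C\<mu> * emeasure M (qball d x r) \<and>
      emeasure M (qball d x r) < \<infinity>"
    using assms(1) unfolding homogeneous_type_def by blast
  have "0 \<le> d x y" "d x y = d y x" for x y
    using qm by (auto simp: quasi_metric_def)
  then obtain q Cinf where p: "p = (\<lambda>x. ereal (q x))" and q: "q \<in> borel_measurable M" "\<And>x. 1 \<le> q x"
    and LH: "\<And>x. \<bar>q x - pinf\<bar> * ln (exp 1 + d x0 x) \<le> Cinf" "\<And>x. q x \<le> pinf + Cinf"
    by (rule LHinf_real_exponent[OF assms(2,4)]) auto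
  obtain K where "weight d M w" and Ap: "\<And>x r. vnorm M p (\<lambda>y. w y * indicator (qball d x r) y)
      * vnorm M (conj_exp p) (\<lambda>y. inverse (w y) * indicator (qball d x r) y)
      \<le> ennreal K * emeasure M (qball d x r)"
    using assms(5) unfolding Ap_def by blast
  then interpret homogeneous_Ap_weight M q w "pinf + Cinf" d x0 pinf Cinf A0 C\<mu> K
    using qm sets doubling q LH unfolding p
    by unfold_locales (auto simp: weight_def intro: sigma_sets.Basic)
  obtain c C where "0 < c" "0 < C" "\<forall>x r. 0 < r \<longrightarrow> 1 \<le> wnorm (qball d x r) \<longrightarrow>
      comparable c C (wnorm (qball d x r)) (epowr (W (qball d x r)) (1 / pinf))"
    using comparable_wnorm_W_powr_qball by blast
  then show ?thesis
    unfolding p by (intro exI[of _ c] exI[of _ C]) (simp add: comparable_def wnorm_def W_def)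
qed

end
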